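(* Let $G$ be the bipartite graph with left vertices $u_1,u_2,u_3$, right vertices $w_1,w_2$, and edges $u_1w_1,\ u_1w_2,\ u_2w_1,\ u_3w_1,\ u_3w_2$ (and no others). Then there exist $n,k\in\mathbb{N}$ with $k\le n$ such that for every 2-coloring of the edges of $B_{n,k}$, there exists an induced monochromatic copy of $G$ in $B_{n,k}$; that is, there is a set $V'$ of vertices of $B_{n,k}$ such that the induced subgraph of $B_{n,k}$ on $V'$ is isomorphic to $G$ and all of its edges receive the same color.
   Context: For $n\in\mathbb{N}$, $[n]=\{1,\dots,n\}$, and for a set $X$, $\binom{X}{k}$ denotes the set of $k$-element subsets of $X$. For $k\le n$, $B_{n,k}$ is the bipartite graph with left vertex set $[n]$, right vertex set $\binom{[n]}{k}$, and edge set $\{(x,X)\in[n]\times\binom{[n]}{k} : x\in X\}$. For a graph $H=(V,E)$ and $V'\subseteq V$, the induced subgraph on $V'$ has vertex set $V'$ and edge set consisting of all edges of $H$ with both endpoints in $V'$. A 2-coloring of the edges is a map from the edge set to a 2-element set of colors. *)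

theory Defs
  imports Main
begin

definition B_verts :: "nat \<Rightarrow> nat \<Rightarrow> (nat + nat set) set" where
  "B_verts n k = Inl ` {1..n} \<union> Inr ` {X. X \<subseteq> {1..n} \<and> card X = k}"

definition B_adj :: "nat \<Rightarrow> nat \<Rightarrow> (nat + nat set) \<Rightarrow> (nat + nat set) \<Rightarrow> bool" where
  "B_adj n k v w \<longleftrightarrow> v \<in> B_verts n k \<and> w \<in> B_verts n k \<and>
     ((\<exists>x X. v = Inl x \<and> w = Inr X \<and> x \<in> X) \<or> (\<exists>x X. w = Inl x \<and> v = Inr X \<and> x \<in> X))"

text \<open>The graph G: left u1,u2,u3 = Inl 1,2,3; right w1,w2 = Inr 1,2.\<close>
definition G_verts :: "(nat + nat) set" where
  "G_verts = Inl ` {1,2,3} \<union> Inr ` {1,2}"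

definition G_edges :: "((nat + nat) \<times> (nat + nat)) set" where
  "G_edges = {(Inl 1, Inr 1), (Inl 1, Inr 2), (Inl 2, Inr 1), (Inl 3, Inr 1), (Inl 3, Inr 2)}"

definition G_adj :: "(nat + nat) \<Rightarrow> (nat + nat) \<Rightarrow> bool" where
  "G_adj a b \<longleftrightarrow> (a, b) \<in> G_edges \<or> (b, a) \<in> G_edges"

definition induced_copy_of_G :: "nat \<Rightarrow> nat \<Rightarrow> (nat + nat set) set \<Rightarrow> bool" where
  "induced_copy_of_G n k V' \<longleftrightarrow> V' \<subseteq> B_verts n k \<and>
     (\<exists>f. bij_betw f G_verts V' \<and>
          (\<forall>a\<in>G_verts. \<forall>b\<in>G_verts. G_adj a b \<longleftrightarrow> B_adj n k (f a) (f b)))"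

text \<open>A 2-colouring of the edges of B_{n,k} is a map c, the edge (x,X) getting colour c x X;
  all edges of the induced subgraph on V' have the same colour.\<close>
definition monochromatic :: "(nat \<Rightarrow> nat set \<Rightarrow> bool) \<Rightarrow> (nat + nat set) set \<Rightarrow> bool" where
  "monochromatic c V' \<longleftrightarrow>
     (\<exists>col. \<forall>x X. Inl x \<in> V' \<and> Inr X \<in> V' \<and> x \<in> X \<longrightarrow> c x X = col)"

end

theory Submission
  imports Defs "HOL-Library.FuncSet"
begin

text \<open>
  Write M y x for the colour of the edge
  between x and [n] - {y}, for x \<noteq> y. Distinct y1, y2, a, b such that M y1 y2, M y1 a, M y1 b,
  M y2 a, M y2 b all agree give an induced monochromatic copy of G: take w_i = [n] - {y_i}, u2 = y2
  and u1, u3 = a, b. For n = 28 such a configuration exists. By pigeonhole, four rows y \<ge> 4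
  agree on the columns 1, 2, 3, hence have a common colour on two of these columns a, b. Among the
  four rows, either one off-diagonal entry has that colour too, or all of them have the other
  colour, and then the four rows alone form the configuration.
\<close>

definition mono_G_pattern :: "('a \<Rightarrow> 'a \<Rightarrow> 'c) \<Rightarrow> 'a \<Rightarrow> 'a \<Rightarrow> 'a \<Rightarrow> 'a \<Rightarrow> bool" where
  "mono_G_pattern M y1 y2 a b \<longleftrightarrow> distinct [y1, y2, a, b] \<and>
     M y1 a = M y1 y2 \<and> M y1 b = M y1 y2 \<and> M y2 a = M y1 y2 \<and> M y2 b = M y1 y2"

lemma induced_copy_of_G_I:
  assumes X1: "X1 \<subseteq> {1..n}" "card X1 = k" and X2: "X2 \<subseteq> {1..n}" "card X2 = k"
    and "X1 \<noteq> X2" and "distinct [a, d, b]"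
    and mem: "a \<in> X1" "d \<in> X1" "b \<in> X1" "a \<in> X2" "d \<notin> X2" "b \<in> X2"
  shows "induced_copy_of_G n k {Inl a, Inl d, Inl b, Inr X1, Inr X2}"
proof -
  let ?V = "{Inl a, Inl d, Inl b, Inr X1, Inr X2}"
  define f where "f v = (if v = Inl 1 then Inl a else if v = Inl 2 then Inl d
      else if v = Inl 3 then Inl b else if v = Inr 1 then Inr X1 else Inr X2)" for v :: "nat + nat"
  have sub: "?V \<subseteq> B_verts n k"
    unfolding B_verts_def using X1 X2 mem by auto
  have "bij_betw f G_verts ?V"
    unfolding bij_betw_def inj_on_def G_verts_def f_def using assms by auto
  moreover have "\<forall>v\<in>G_verts. \<forall>w\<in>G_verts. G_adj v w \<longleftrightarrow> B_adj n k (f v) (f w)"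
    unfolding G_verts_def G_adj_def G_edges_def B_adj_def f_def using sub mem by auto
  ultimately show ?thesis
    unfolding induced_copy_of_G_def using sub by blast
qed

lemma induced_copy_of_G_cosingletons:
  assumes "distinct [y1, y2, a, b]" "{y1, y2, a, b} \<subseteq> {1..n}"
  shows "induced_copy_of_G n (n - 1)
           {Inl a, Inl y2, Inl b, Inr ({1..n} - {y1}), Inr ({1..n} - {y2})}"
proof (rule induced_copy_of_G_I)
  have in_range: "y1 \<in> {1..n}" "y2 \<in> {1..n}" "a \<in> {1..n}" "b \<in> {1..n}"
    using assms(2) by simp_all
  then show "card ({1..n} - {y1}) = n - 1" "card ({1..n} - {y2}) = n - 1"
    by (simp_all add: card_Diff_singleton)
  show mem: "a \<in> {1..n} - {y1}" "y2 \<in> {1..n} - {y1}" "b \<in> {1..n} - {y1}"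
    "a \<in> {1..n} - {y2}" "y2 \<notin> {1..n} - {y2}" "b \<in> {1..n} - {y2}"
    using assms(1) in_range by auto
  then show "{1..n} - {y1} \<noteq> {1..n} - {y2}"
    by blast
  show "distinct [a, y2, b]"
    using assms(1) by auto
qed auto

lemma monochromatic_I:
  assumes "d \<notin> X2" "c a X1 = col" "c d X1 = col" "c b X1 = col" "c a X2 = col" "c b X2 = col"
  shows "monochromatic c {Inl a, Inl d, Inl b, Inr X1, Inr X2}"
  unfolding monochromatic_def using assms by blast

lemma monochromatic_cosingletons:
  assumes "mono_G_pattern (\<lambda>y x. c x ({1..n} - {y})) y1 y2 a b"
  shows "monochromatic c {Inl a, Inl y2, Inl b, Inr ({1..n} - {y1}), Inr ({1..n} - {y2})}"
  by (rule monochromatic_I) (use assms in \<open>auto simp: mono_G_pattern_def\<close>)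

lemma mono_G_pattern_among_four_rows:
  fixes M :: "'a \<Rightarrow> 'a \<Rightarrow> bool"
  assumes distinct: "distinct [u1, u2, u3, u4, a, b]"
    and columns: "\<forall>u\<in>{u1, u2, u3, u4}. M u a = col \<and> M u b = col"
  shows "\<exists>y1 y2 x1 x2. {y1, y2, x1, x2} \<subseteq> {u1, u2, u3, u4, a, b} \<and> mono_G_pattern M y1 y2 x1 x2"
proof (cases "\<exists>u\<in>{u1, u2, u3, u4}. \<exists>v\<in>{u1, u2, u3, u4}. u \<noteq> v \<and> M u v = col")
  case True
  then obtain u v where "u \<in> {u1, u2, u3, u4}" "v \<in> {u1, u2, u3, u4}" "u \<noteq> v" "M u v = col"
    by blast
  then have "mono_G_pattern M u v a b"
    using distinct columns unfolding mono_G_pattern_def by auto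
  then show ?thesis
    using \<open>u \<in> _\<close> \<open>v \<in> _\<close> by blast
next
  case False
  then have "mono_G_pattern M u1 u2 u3 u4"
    using distinct unfolding mono_G_pattern_def by auto
  then show ?thesis
    by blast
qed

lemma mono_G_pattern_exists:
  fixes M :: "nat \<Rightarrow> nat \<Rightarrow> bool"
  shows "\<exists>y1 y2 a b. {y1, y2, a, b} \<subseteq> {1..28} \<and> mono_G_pattern M y1 y2 a b"
proof -
  define R where "R = {4..28::nat}"
  define p where "p y = (M y 1, M y 2, M y 3)" for y
  obtain q where pigeonhole:
      "card R \<le> card (p -` {q} \<inter> R) * card (UNIV :: (bool \<times> bool \<times> bool) set)"
    using pigeonhole_card[of p R UNIV] unfolding R_def by auto
  define S where "S = p -` {q} \<inter> R"
  have "4 \<le> card S"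
    using pigeonhole[folded S_def] by (simp add: R_def card_UNIV_bool flip: UNIV_Times_UNIV)
  then obtain u1 u2 u3 u4 where "distinct [u1, u2, u3, u4]" "{u1, u2, u3, u4} \<subseteq> S"
    by (auto simp: card_le_Suc_iff numeral_eq_Suc)
  then have rows: "distinct [u1, u2, u3, u4]" "{u1, u2, u3, u4} \<subseteq> p -` {q} \<inter> R"
    unfolding S_def by auto
  obtain a b col where ab: "a \<in> {1, 2, 3}" "b \<in> {1, 2, 3}" "a \<noteq> b"
    and columns: "\<And>y. p y = q \<Longrightarrow> M y a = col \<and> M y b = col"
  proof -
    obtain q1 q2 q3 where "q = (q1, q2, q3)"
      by (cases q) auto
    moreover have "q1 = q2 \<or> q1 = q3 \<or> q2 = q3"
      by auto
    ultimately show ?thesis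
      using that[of 1 2 q1] that[of 1 3 q1] that[of 2 3 q2] unfolding p_def by auto
  qed
  have "distinct [u1, u2, u3, u4, a, b]"
    using rows ab unfolding R_def by auto
  moreover have "\<forall>u\<in>{u1, u2, u3, u4}. M u a = col \<and> M u b = col"
    using rows columns by blast
  ultimately have "\<exists>y1 y2 x1 x2. {y1, y2, x1, x2} \<subseteq> {u1, u2, u3, u4, a, b} \<and>
      mono_G_pattern M y1 y2 x1 x2"
    by (rule mono_G_pattern_among_four_rows)
  moreover have "{u1, u2, u3, u4, a, b} \<subseteq> {1..28}"
    using rows ab unfolding R_def by auto
  ultimately show ?thesis
    by (meson subset_trans)
qed

theorem mainTheorem4:
  shows "\<exists>n k::nat. k \<le> n \<and>
           (\<forall>c :: nat \<Rightarrow> nat set \<Rightarrow> bool.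
              \<exists>V'. induced_copy_of_G n k V' \<and> monochromatic c V')"
proof (rule exI[of _ 28], rule exI[of _ 27], intro conjI allI)
  show "27 \<le> (28::nat)"
    by simp
  fix c :: "nat \<Rightarrow> nat set \<Rightarrow> bool"
  obtain y1 y2 a b where "{y1, y2, a, b} \<subseteq> {1..28}"
    and pattern: "mono_G_pattern (\<lambda>y x. c x ({1..28} - {y})) y1 y2 a b"
    using mono_G_pattern_exists by blast
  then have "induced_copy_of_G 28 (28 - 1)
      {Inl a, Inl y2, Inl b, Inr ({1..28} - {y1}), Inr ({1..28} - {y2})}"
    by (intro induced_copy_of_G_cosingletons) (auto simp: mono_G_pattern_def)
  then show "\<exists>V'. induced_copy_of_G 28 27 V' \<and> monochromatic c V'"
    using monochromatic_cosingletons[OF pattern] by auto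
qed

end
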